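(* Consider the $K$-armed stochastic bandit problem described in the context, with rewards in $[0,1]$, and let the agent use the following UCB policy: for $t=1,\dots,K$ play arm $t$; for $t\ge K+1$ play an arm maximizing \[\frac{S_a(t-1)}{N_a(t-1)}+\sqrt{\frac{\log(t)+3\log\log(t)}{2N_a(t-1)}}\] (ties broken arbitrarily). Let $a^*$ be an optimal arm and $a$ an arm with $\mu_a<\mu_{a^*}$. Then for every $\epsilon>0$ there exist a constant $C_1>0$ and positive numbers $C_2(\epsilon),\beta(\epsilon)$ such that for every integer $n\ge3$, \[\mathbb{E}[N_n(a)] \leq \frac{\log(n)}{2(\mu_a-\mu_{a^*})^2}(1+\epsilon) + C_1\log(\log(n)) + \frac{C_2(\epsilon)}{n^{\beta(\epsilon)}}\;.\]
   Context: Bandit setting: there are $K\ge 2$ arms. For each arm $a\in\{1,\dots,K\}$, $(X_{a,s})_{s\ge1}$ is an i.i.d. sequence of rewards taking values in $[0,1]$ with mean $\mu_a$; the sequences for different arms are independent. At each time $t$ a policy chooses an arm $A_t$ based on past choices and observed rewards, and receives $X_t=X_{A_t,N_{A_t}(t)}$, where $N_a(t)=\sum_{s=1}^t \mathbb{1}\{A_s=a\}$ (also written $N_n(a)$ for $t=n$), and $S_a(t)=\sum_{s\le t}\mathbb{1}\{A_s=a\}X_s$. $\mu_{a^*}=\max_a\mu_a$ and $a^*$ is any arm attaining it. *)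

theory Defs
  imports "HOL-Probability.Probability"
begin

text \<open>Arms are 1..K, times t = 1,2,..., samples of an arm are indexed s = 1,2,...
  A history is the list of arms played so far (h ! (i-1) = A_i) together with the
  list of rewards observed so far (r ! (i-1) = X_i).\<close>

definition cnt :: "nat \<Rightarrow> nat list \<Rightarrow> nat" where
  "cnt a h = length (filter (\<lambda>b. b = a) h)"

definition rsum :: "nat \<Rightarrow> nat list \<Rightarrow> real list \<Rightarrow> real" where
  "rsum a h r = (\<Sum>i<length h. if h ! i = a then r ! i else 0)"

definition ucb_index :: "nat \<Rightarrow> nat list \<Rightarrow> real list \<Rightarrow> nat \<Rightarrow> real" where
  "ucb_index t h r a =
     rsum a h r / real (cnt a h)
     + sqrt ((ln (real t) + 3 * ln (ln (real t))) / (2 * real (cnt a h)))"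

definition is_ucb_choice :: "nat \<Rightarrow> nat \<Rightarrow> nat list \<Rightarrow> real list \<Rightarrow> nat \<Rightarrow> bool" where
  "is_ucb_choice K t h r a \<longleftrightarrow>
     a \<in> {1..K} \<and> (\<forall>b\<in>{1..K}. ucb_index t h r b \<le> ucb_index t h r a)"

text \<open>The play up to time n, for reward table x (x a s = X_{a,s}) and tie-breaking rule tb
  (tb t h r = arm chosen at time t > K from the history (h, r)).  The reward received at
  time t is X_{A_t, N_{A_t}(t)}.\<close>
fun ucb_play :: "nat \<Rightarrow> (nat \<Rightarrow> nat list \<Rightarrow> real list \<Rightarrow> nat) \<Rightarrow> (nat \<Rightarrow> nat \<Rightarrow> real)
                   \<Rightarrow> nat \<Rightarrow> nat list \<times> real list" where
  "ucb_play K tb x 0 = ([], [])"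
| "ucb_play K tb x (Suc t) =
     (let (h, r) = ucb_play K tb x t;
          a = (if Suc t \<le> K then Suc t else tb (Suc t) h r)
      in (h @ [a], r @ [x a (cnt a h + 1)]))"

definition pulls :: "nat \<Rightarrow> (nat \<Rightarrow> nat list \<Rightarrow> real list \<Rightarrow> nat) \<Rightarrow> (nat \<Rightarrow> nat \<Rightarrow> real)
                     \<Rightarrow> nat \<Rightarrow> nat \<Rightarrow> nat" where
  "pulls K tb x n a = cnt a (fst (ucb_play K tb x n))"

end

theory Submission
  imports Defs
begin

text \<open>
  Pathwise, every pull of \<open>a\<close>
  after the initialisation either happens at a time \<open>t\<close> where the index of the optimal arm has
  dropped below \<open>\<mu>\<^sup>*\<close>, or while the index of \<open>a\<close> computed from its first \<open>k\<close> samples at the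
  level \<open>f(n)\<close> exceeds \<open>\<mu>\<^sup>*\<close>; each \<open>k\<close> is counted once.  Taking expectations, two sums of
  probabilities have to be controlled.  The first needs a bound that is uniform in the number
  of pulls of the optimal arm: a maximal inequality for the exponential supermartingale of
  Hoeffding's lemma, combined with peeling over geometric slices,
  gives \<open>P(optimal arm underestimated at t) \<le> 6/(t log t)\<close>, whose sum is \<open>O(log log n)\<close>.
  The second is Hoeffding's inequality for the first \<open>k\<close> samples of \<open>a\<close>: up to
  \<open>u = (1+\<epsilon>) f(n)/(2\<Delta>\<^sup>2)\<close> the probabilities are bounded by 1, beyond \<open>u\<close> they form a
  geometric series whose sum is \<open>O(n^-\<beta>)\<close>.
\<close>

section \<open>Combinatorics of the UCB play\<close>

lemma cnt_append [simp]: "cnt a (xs @ ys) = cnt a xs + cnt a ys"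
  by (simp add: cnt_def)

lemma cnt_Cons [simp]: "cnt a (y # ys) = (if y = a then 1 else 0) + cnt a ys"
  by (simp add: cnt_def)

lemma cnt_Nil [simp]: "cnt a [] = 0"
  by (simp add: cnt_def)

lemma cnt_le_length: "cnt a h \<le> length h"
  by (simp add: cnt_def)

definition arm_at :: "nat \<Rightarrow> (nat \<Rightarrow> nat list \<Rightarrow> real list \<Rightarrow> nat) \<Rightarrow> (nat \<Rightarrow> nat \<Rightarrow> real)
                      \<Rightarrow> nat \<Rightarrow> nat" where
  "arm_at K tb x t =
     (if t \<le> K then t else tb t (fst (ucb_play K tb x (t - 1))) (snd (ucb_play K tb x (t - 1))))"

lemma ucb_play_Suc_arms:
  "fst (ucb_play K tb x (Suc t)) = fst (ucb_play K tb x t) @ [arm_at K tb x (Suc t)]"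
  by (simp add: arm_at_def Let_def split: prod.splits)

lemma ucb_play_Suc_rewards:
  "snd (ucb_play K tb x (Suc t)) = snd (ucb_play K tb x t)
     @ [x (arm_at K tb x (Suc t)) (cnt (arm_at K tb x (Suc t)) (fst (ucb_play K tb x t)) + 1)]"
  by (simp add: arm_at_def Let_def split: prod.splits)

lemma ucb_play_length:
  "length (fst (ucb_play K tb x t)) = t" "length (snd (ucb_play K tb x t)) = t"
  by (induction t) (simp_all add: ucb_play_Suc_arms ucb_play_Suc_rewards del: ucb_play.simps(2))

lemma rsum_snoc:
  "length r = length h \<Longrightarrow> rsum a (h @ [c]) (r @ [v]) = rsum a h r + (if c = a then v else 0)"
  by (auto simp: rsum_def nth_append intro!: sum.cong)

lemma ucb_play_rsum:
  "rsum b (fst (ucb_play K tb x t)) (snd (ucb_play K tb x t))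
     = (\<Sum>s\<in>{1..cnt b (fst (ucb_play K tb x t))}. x b s)"
proof (induction t)
  case (Suc t)
  have "length (snd (ucb_play K tb x t)) = length (fst (ucb_play K tb x t))"
    by (simp add: ucb_play_length)
  with Suc.IH show ?case
    by (simp add: ucb_play_Suc_arms ucb_play_Suc_rewards rsum_snoc add.commute
             del: ucb_play.simps(2))
qed (simp add: rsum_def)

lemma ucb_play_prefix: "m \<le> t \<Longrightarrow> \<exists>ys. fst (ucb_play K tb x t) = fst (ucb_play K tb x m) @ ys"
proof (induction t)
  case (Suc t)
  then show ?case
    by (cases "m = Suc t") (force simp: ucb_play_Suc_arms le_Suc_eq simp del: ucb_play.simps(2))+
qed simp

lemma ucb_play_init: "t \<le> K \<Longrightarrow> fst (ucb_play K tb x t) = [1..<Suc t]"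
  by (induction t) (auto simp: ucb_play_Suc_arms arm_at_def simp del: ucb_play.simps(2))

lemma cnt_upt_le_one: "cnt a [1..<Suc t] \<le> 1"
  by (induction t) (auto simp: cnt_def filter_empty_conv)

lemma cnt_upt_ge_one: "a \<in> {1..t} \<Longrightarrow> 1 \<le> cnt a [1..<Suc t]"
  by (induction t) (auto simp: le_Suc_eq)

lemma pulled_after_init:
  assumes "K \<le> t" "b \<in> {1..K}"
  shows "1 \<le> cnt b (fst (ucb_play K tb x t))"
proof -
  obtain ys where "fst (ucb_play K tb x t) = fst (ucb_play K tb x K) @ ys"
    using ucb_play_prefix assms(1) by blast
  then show ?thesis
    using ucb_play_init[of K K tb x] cnt_upt_ge_one[OF assms(2)] by simp
qed

section \<open>The pathwise regret decomposition\<close>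

definition exploration :: "nat \<Rightarrow> real" where
  "exploration t = ln (real t) + 3 * ln (ln (real t))"

definition sample_index :: "(nat \<Rightarrow> nat \<Rightarrow> real) \<Rightarrow> nat \<Rightarrow> nat \<Rightarrow> nat \<Rightarrow> real" where
  "sample_index x b k t = (\<Sum>s\<in>{1..k}. x b s) / real k + sqrt (exploration t / (2 * real k))"

lemma exploration_mono:
  assumes "3 \<le> p" "p \<le> q"
  shows "exploration p \<le> exploration q"
proof -
  have "ln (real p) \<le> ln (real q)" and "0 < ln (real p)"
    using assms by simp_all
  then have "ln (ln (real p)) \<le> ln (ln (real q))"
    by simp
  with \<open>ln (real p) \<le> ln (real q)\<close> show ?thesis
    by (simp add: exploration_def)
qed

lemma sample_index_mono:
  assumes "3 \<le> t" "t \<le> n"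
  shows "sample_index x b k t \<le> sample_index x b k n"
  unfolding sample_index_def
  using exploration_mono[OF assms]
  by (simp add: divide_right_mono)

lemma ucb_index_on_play:
  "ucb_index t (fst (ucb_play K tb x m)) (snd (ucb_play K tb x m)) b
     = sample_index x b (cnt b (fst (ucb_play K tb x m))) t"
  by (simp add: ucb_index_def sample_index_def exploration_def ucb_play_rsum)

lemma chosen_arm_overestimated:
  assumes K2: "K \<ge> 2"
    and ucb: "\<forall>t h r. K < t \<longrightarrow> length h = t - 1 \<longrightarrow> length r = t - 1
                \<longrightarrow> is_ucb_choice K t h r (tb t h r)"
    and astar: "astar \<in> {1..K}"
    and t: "K \<le> t" "Suc t \<le> n"
    and chosen: "arm_at K tb x (Suc t) = a"
    and optimist: "\<forall>k\<in>{1..t}. \<mu> < sample_index x astar k (Suc t)"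
  shows "1 \<le> cnt a (fst (ucb_play K tb x t))"
    and "\<mu> < sample_index x a (cnt a (fst (ucb_play K tb x t))) n"
proof -
  define h where "h = fst (ucb_play K tb x t)"
  define r where "r = snd (ucb_play K tb x t)"
  have choice: "is_ucb_choice K (Suc t) h r a"
    using ucb[rule_format, of "Suc t" h r] t chosen by (simp add: arm_at_def h_def r_def ucb_play_length)
  then show "1 \<le> cnt a (fst (ucb_play K tb x t))"
    using pulled_after_init[OF t(1)] by (simp add: is_ucb_choice_def h_def)
  have "1 \<le> cnt astar h" "cnt astar h \<le> t"
    using pulled_after_init[OF t(1) astar] cnt_le_length[of astar h]
    by (simp_all add: h_def ucb_play_length)
  then have "\<mu> < ucb_index (Suc t) h r astar"
    using optimist by (simp add: h_def r_def ucb_index_on_play)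
  also have "\<dots> \<le> ucb_index (Suc t) h r a"
    using choice astar by (simp add: is_ucb_choice_def)
  also have "\<dots> = sample_index x a (cnt a h) (Suc t)"
    by (simp add: h_def r_def ucb_index_on_play)
  also have "\<dots> \<le> sample_index x a (cnt a h) n"
    using K2 t by (intro sample_index_mono) auto
  finally show "\<mu> < sample_index x a (cnt a (fst (ucb_play K tb x t))) n"
    by (simp add: h_def)
qed

lemma pulls_decomposition:
  assumes K2: "K \<ge> 2"
    and ucb: "\<forall>t h r. K < t \<longrightarrow> length h = t - 1 \<longrightarrow> length r = t - 1
                \<longrightarrow> is_ucb_choice K t h r (tb t h r)"
    and astar: "astar \<in> {1..K}"
    and "m \<le> n"
  shows "cnt a (fst (ucb_play K tb x m)) \<le> 1
    + card {t\<in>{K<..m}. \<exists>k\<in>{1..t-1}. sample_index x astar k t \<le> \<mu>}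
    + card {k\<in>{1..n}. k < cnt a (fst (ucb_play K tb x m)) \<and> \<mu> < sample_index x a k n}"
  using \<open>m \<le> n\<close>
proof (induction m)
  case (Suc m)
  define h where "h = fst (ucb_play K tb x m)"
  define under where "under t \<longleftrightarrow> (\<exists>k\<in>{1..t-1}. sample_index x astar k t \<le> \<mu>)" for t
  define over where "over c = {k\<in>{1..n}. k < c \<and> \<mu> < sample_index x a k n}" for c
  have IH: "cnt a h \<le> 1 + card {t\<in>{K<..m}. under t} + card (over (cnt a h))"
    using Suc by (simp add: h_def under_def over_def)
  have under_mono: "card {t\<in>{K<..m}. under t} \<le> card {t\<in>{K<..Suc m}. under t}"
    by (intro card_mono) auto
  have over_mono: "card (over c) \<le> card (over (Suc c))" for c
    by (intro card_mono) (auto simp: over_def)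
  have "cnt a (h @ [arm_at K tb x (Suc m)])
          \<le> 1 + card {t\<in>{K<..Suc m}. under t} + card (over (cnt a (h @ [arm_at K tb x (Suc m)])))"
  proof (cases "Suc m \<le> K \<or> arm_at K tb x (Suc m) \<noteq> a")
    case True
    then show ?thesis
    proof
      assume "Suc m \<le> K"
      then have "cnt a (h @ [arm_at K tb x (Suc m)]) \<le> 1"
        using ucb_play_init cnt_upt_le_one by (metis h_def ucb_play_Suc_arms)
      then show ?thesis by linarith
    qed (use IH under_mono in simp)
  next
    case False
    then have mK: "K \<le> m" and chosen: "arm_at K tb x (Suc m) = a" by auto
    show ?thesis
    proof (cases "under (Suc m)")
      case True
      then have "{t\<in>{K<..Suc m}. under t} = insert (Suc m) {t\<in>{K<..m}. under t}"
        using mK by auto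
      then show ?thesis
        using IH over_mono[of "cnt a h"] chosen by simp
    next
      case False
      then have optimist: "\<forall>k\<in>{1..m}. \<mu> < sample_index x astar k (Suc m)"
        by (auto simp: under_def not_le)
      have "1 \<le> cnt a h" "\<mu> < sample_index x a (cnt a h) n"
        using chosen_arm_overestimated[OF K2 ucb astar mK Suc.prems chosen optimist]
        by (simp_all add: h_def)
      moreover have "cnt a h \<le> m"
        using cnt_le_length[of a h] by (simp add: h_def ucb_play_length)
      ultimately have "over (Suc (cnt a h)) = insert (cnt a h) (over (cnt a h))"
        using Suc.prems by (auto simp: over_def)
      then show ?thesis
        using IH under_mono chosen by (simp add: over_def)
    qed
  qed
  then show ?case
    by (simp add: ucb_play_Suc_arms h_def under_def over_def del: ucb_play.simps(2))
qed simp

section \<open>A maximal inequality for sub-Gaussian increments\<close>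

text \<open>For increments \<open>Y\<^sub>i\<close> with \<open>E exp(\<lambda> Y\<^sub>i - \<lambda>\<^sup>2/8) \<le> 1\<close> the products
  \<open>Z\<^sub>k = \<Prod>\<^sub>i\<^sub>\<le>\<^sub>k exp(\<lambda> Y\<^sub>i - \<lambda>\<^sup>2/8)\<close> form a non-negative supermartingale.  Stopping it when it
  first reaches \<open>c\<close> and applying Markov's inequality yields Ville's maximal inequality
  \<open>P(\<exists>k \<le> m. Z\<^sub>k \<ge> c) \<le> 1/c\<close>.  The process is written as a function of the increment sequence.\<close>

definition hoeffding_factor :: "real \<Rightarrow> real \<Rightarrow> real" where
  "hoeffding_factor l y = exp (l * y - l\<^sup>2 / 8)"

definition exp_process :: "real \<Rightarrow> (nat \<Rightarrow> real) \<Rightarrow> nat \<Rightarrow> real" where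
  "exp_process l v k = (\<Prod>i\<in>{1..k}. hoeffding_factor l (v i))"

definition running :: "real \<Rightarrow> real \<Rightarrow> (nat \<Rightarrow> real) \<Rightarrow> nat \<Rightarrow> bool" where
  "running l c v i \<longleftrightarrow> (\<forall>j\<in>{1..<i}. exp_process l v j < c)"

definition stopped_process :: "real \<Rightarrow> real \<Rightarrow> (nat \<Rightarrow> real) \<Rightarrow> nat \<Rightarrow> real" where
  "stopped_process l c v k = (\<Prod>i\<in>{1..k}. if running l c v i then hoeffding_factor l (v i) else 1)"

lemma exp_process_eq: "exp_process l v k = exp (l * (\<Sum>i\<in>{1..k}. v i) - real k * l\<^sup>2 / 8)"
  unfolding exp_process_def hoeffding_factor_def
  by (simp add: exp_sum[symmetric] sum_subtractf sum_distrib_left)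

lemma stopped_process_Suc:
  "stopped_process l c v (Suc k)
     = stopped_process l c v k * (if running l c v (Suc k) then hoeffding_factor l (v (Suc k)) else 1)"
  by (simp add: stopped_process_def)

lemma stopped_process_cong:
  assumes "\<And>i. i \<in> {1..k} \<Longrightarrow> v i = v' i"
  shows "stopped_process l c v k = stopped_process l c v' k"
    and "running l c v (Suc k) = running l c v' (Suc k)"
proof -
  have "exp_process l v j = exp_process l v' j" if "j \<le> k" for j
    unfolding exp_process_def using assms that by (intro prod.cong) auto
  then have "running l c v i = running l c v' i" if "i \<le> Suc k" for i
    unfolding running_def using that by (intro ball_cong) auto
  then show "stopped_process l c v k = stopped_process l c v' k"
    and "running l c v (Suc k) = running l c v' (Suc k)"
    unfolding stopped_process_def using assms by (auto intro!: prod.cong)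
qed

lemma stopped_process_at_crossing:
  assumes k0: "k0 \<in> {1..m}" and cross: "c \<le> exp_process l v k0" and before: "running l c v k0"
  shows "stopped_process l c v m = exp_process l v k0"
proof -
  have split: "{1..m} = {1..k0} \<union> {k0<..m}"
    using k0 by auto
  have "(\<Prod>i\<in>{1..k0}. if running l c v i then hoeffding_factor l (v i) else 1) = exp_process l v k0"
    unfolding exp_process_def using before by (intro prod.cong) (auto simp: running_def)
  moreover have "\<not> running l c v i" if "i \<in> {k0<..m}" for i
    unfolding running_def using k0 cross that by (auto intro!: bexI[of _ k0])
  ultimately show ?thesis
    unfolding stopped_process_def split by (simp add: prod.union_disjoint ivl_disj_int)
qed

lemma hoeffding_factor_bounds: "\<bar>y\<bar> \<le> 1 \<Longrightarrow> 0 \<le> hoeffding_factor l y \<and> hoeffding_factor l y \<le> exp \<bar>l\<bar>"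
proof -
  assume "\<bar>y\<bar> \<le> 1"
  then have "l * y \<le> \<bar>l\<bar>"
    by (metis abs_ge_self abs_ge_zero abs_mult mult_left_le order_trans)
  moreover have "0 \<le> l\<^sup>2 / 8"
    by simp
  ultimately have "l * y - l\<^sup>2 / 8 \<le> \<bar>l\<bar>"
    by linarith
  then show ?thesis
    unfolding hoeffding_factor_def by simp
qed

lemma stopped_process_bounds:
  assumes "\<And>i. i \<in> {1..k} \<Longrightarrow> \<bar>v i\<bar> \<le> 1"
  shows "0 \<le> stopped_process l c v k \<and> stopped_process l c v k \<le> exp \<bar>l\<bar> ^ k"
  unfolding stopped_process_def
  using assms hoeffding_factor_bounds by (auto intro!: prod_nonneg prod_le_power)

lemma stopped_process_measurable:
  "(\<lambda>v. stopped_process l c v k) \<in> borel_measurable (PiM {1..k} (\<lambda>_. borel))"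
  "(\<lambda>v. if running l c v (Suc k) then 1 else 0 :: real) \<in> borel_measurable (PiM {1..k} (\<lambda>_. borel))"
  unfolding stopped_process_def running_def exp_process_def hoeffding_factor_def
  by measurable

context prob_space
begin

context
  fixes Y :: "nat \<Rightarrow> 'a \<Rightarrow> real" and l c :: real
  assumes indep: "indep_vars (\<lambda>_. borel) Y {1..}"
    and bounded: "\<And>i \<omega>. 1 \<le> i \<Longrightarrow> \<omega> \<in> space M \<Longrightarrow> \<bar>Y i \<omega>\<bar> \<le> 1"
    and mgf: "\<And>i. 1 \<le> i \<Longrightarrow> (\<integral>\<omega>. hoeffding_factor l (Y i \<omega>) \<partial>M) \<le> 1"
begin

lemma restrict_increments_measurable:
  "A \<subseteq> {1..} \<Longrightarrow> (\<lambda>\<omega>. restrict (\<lambda>i. Y i \<omega>) A) \<in> measurable M (PiM A (\<lambda>_. borel))"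
  using indep by (intro measurable_restrict) (auto simp: indep_vars_def)

lemma stopped_process_integrable:
  "integrable M (\<lambda>\<omega>. stopped_process l c (\<lambda>i. Y i \<omega>) k)"
proof (rule integrable_const_bound[where B = "exp \<bar>l\<bar> ^ k"])
  have "(\<lambda>\<omega>. stopped_process l c (\<lambda>i. Y i \<omega>) k)
          = (\<lambda>v. stopped_process l c v k) \<circ> (\<lambda>\<omega>. restrict (\<lambda>i. Y i \<omega>) {1..k})"
    unfolding comp_def by (intro ext stopped_process_cong(1)) simp
  then show "(\<lambda>\<omega>. stopped_process l c (\<lambda>i. Y i \<omega>) k) \<in> borel_measurable M"
    using measurable_comp[OF restrict_increments_measurable stopped_process_measurable(1)] by auto
  show "AE \<omega> in M. norm (stopped_process l c (\<lambda>i. Y i \<omega>) k) \<le> exp \<bar>l\<bar> ^ k"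
    using stopped_process_bounds bounded by (intro AE_I2) auto
qed

text \<open>Supermartingale step: the next factor is independent of the past and has mean \<open>\<le> 1\<close>.\<close>

lemma stopped_process_step:
  "(\<integral>\<omega>. stopped_process l c (\<lambda>i. Y i \<omega>) (Suc k) \<partial>M) \<le> (\<integral>\<omega>. stopped_process l c (\<lambda>i. Y i \<omega>) k \<partial>M)"
proof -
  define W where "W \<omega> = stopped_process l c (\<lambda>i. Y i \<omega>) k" for \<omega>
  define past where "past v = stopped_process l c v k * (if running l c v (Suc k) then 1 else 0)"
    for v
  define G where "G = past \<circ> (\<lambda>\<omega>. restrict (\<lambda>i. Y i \<omega>) {1..k})"
  define F where "F = (\<lambda>v. hoeffding_factor l (v (Suc k))) \<circ> (\<lambda>\<omega>. restrict (\<lambda>i. Y i \<omega>) {Suc k})"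
  have G_eq: "G \<omega> = W \<omega> * (if running l c (\<lambda>i. Y i \<omega>) (Suc k) then 1 else 0)" for \<omega>
    unfolding G_def past_def W_def
    using stopped_process_cong[of k "restrict (\<lambda>i. Y i \<omega>) {1..k}" "\<lambda>i. Y i \<omega>"] by simp
  have F_eq: "F \<omega> = hoeffding_factor l (Y (Suc k) \<omega>)" for \<omega>
    by (simp add: F_def)
  have past_meas: "past \<in> borel_measurable (PiM {1..k} (\<lambda>_. borel))"
    unfolding past_def using stopped_process_measurable by measurable
  have next_meas: "(\<lambda>v. hoeffding_factor l (v (Suc k))) \<in> borel_measurable (PiM {Suc k} (\<lambda>_. borel))"
    unfolding hoeffding_factor_def by measurable
  have indep_GF: "indep_var borel G borel F"
    unfolding G_def F_def
    by (rule indep_var_compose[OF indep_var_restrict[OF indep] past_meas next_meas]) auto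
  have int_G: "integrable M G"
  proof (rule integrable_const_bound[where B = "exp \<bar>l\<bar> ^ k"])
    show "G \<in> borel_measurable M"
      unfolding G_def using measurable_comp[OF restrict_increments_measurable past_meas] by auto
    show "AE \<omega> in M. norm (G \<omega>) \<le> exp \<bar>l\<bar> ^ k"
      using stopped_process_bounds bounded by (intro AE_I2) (auto simp: G_eq W_def)
  qed
  have int_F: "integrable M F"
  proof (rule integrable_const_bound[where B = "exp \<bar>l\<bar>"])
    show "F \<in> borel_measurable M"
      unfolding F_def using measurable_comp[OF restrict_increments_measurable next_meas] by auto
    show "AE \<omega> in M. norm (F \<omega>) \<le> exp \<bar>l\<bar>"
      using hoeffding_factor_bounds bounded by (intro AE_I2) (auto simp: F_eq)
  qed
  have "(\<integral>\<omega>. G \<omega> \<partial>M) \<ge> 0"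
    using stopped_process_bounds bounded by (intro integral_nonneg_AE AE_I2) (auto simp: G_eq W_def)
  moreover have "(\<integral>\<omega>. F \<omega> \<partial>M) \<le> 1"
    unfolding F_eq using mgf by simp
  ultimately have "(\<integral>\<omega>. G \<omega> \<partial>M) * (\<integral>\<omega>. F \<omega> \<partial>M) \<le> (\<integral>\<omega>. G \<omega> \<partial>M)"
    by (simp add: mult_left_le)
  moreover have "stopped_process l c (\<lambda>i. Y i \<omega>) (Suc k) = W \<omega> - G \<omega> + G \<omega> * F \<omega>" for \<omega>
    by (simp add: G_eq F_eq W_def stopped_process_Suc)
  ultimately show ?thesis
    using stopped_process_integrable int_G indep_var_integrable[OF indep_GF int_G int_F]
      indep_var_lebesgue_integral[OF indep_GF int_G int_F]
    by (simp add: W_def)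
qed

lemma stopped_process_expectation: "(\<integral>\<omega>. stopped_process l c (\<lambda>i. Y i \<omega>) k \<partial>M) \<le> 1"
proof (induction k)
  case 0
  then show ?case by (simp add: stopped_process_def prob_space)
next
  case (Suc k)
  then show ?case using stopped_process_step[of k] by linarith
qed

end

lemma exp_supermartingale_maximal:
  fixes Y :: "nat \<Rightarrow> 'a \<Rightarrow> real"
  assumes indep: "indep_vars (\<lambda>_. borel) Y {1..}"
    and bounded: "\<And>i \<omega>. 1 \<le> i \<Longrightarrow> \<omega> \<in> space M \<Longrightarrow> \<bar>Y i \<omega>\<bar> \<le> 1"
    and mgf: "\<And>i. 1 \<le> i \<Longrightarrow> (\<integral>\<omega>. hoeffding_factor l (Y i \<omega>) \<partial>M) \<le> 1"
  shows "prob {\<omega>\<in>space M. \<exists>k\<in>{1..m}. l * (\<Sum>i\<in>{1..k}. Y i \<omega>) - real k * l\<^sup>2 / 8 \<ge> x}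
           \<le> exp (- x)"
proof -
  define c where "c = exp x"
  define W where "W \<omega> = stopped_process l c (\<lambda>i. Y i \<omega>) m" for \<omega>
  have W_int: "integrable M W"
    unfolding W_def by (rule stopped_process_integrable[OF indep bounded mgf])
  have W_nonneg: "AE \<omega> in M. 0 \<le> W \<omega>"
    unfolding W_def using stopped_process_bounds bounded by (intro AE_I2) auto
  have "{\<omega>\<in>space M. c \<le> W \<omega>} \<in> events"
    using borel_measurable_integrable[OF W_int] by measurable
  moreover have "{\<omega>\<in>space M. \<exists>k\<in>{1..m}. l * (\<Sum>i\<in>{1..k}. Y i \<omega>) - real k * l\<^sup>2 / 8 \<ge> x}
                   \<subseteq> {\<omega>\<in>space M. c \<le> W \<omega>}"
  proof safe
    fix \<omega> k
    assume \<omega>: "\<omega> \<in> space M" and k: "k \<in> {1..m}"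
      and "x \<le> l * (\<Sum>i\<in>{1..k}. Y i \<omega>) - real k * l\<^sup>2 / 8"
    define Z where "Z = exp_process l (\<lambda>i. Y i \<omega>)"
    define crossing where "crossing j \<longleftrightarrow> j \<in> {1..m} \<and> c \<le> Z j" for j
    have "crossing k"
      using k \<open>x \<le> _\<close> by (simp add: crossing_def Z_def c_def exp_process_eq)
    define k0 where "k0 = (LEAST j. crossing j)"
    have k0: "crossing k0"
      unfolding k0_def by (rule LeastI) fact
    have "Z j < c" if "j \<in> {1..<k0}" for j
      using not_less_Least[of j crossing] k0 that by (auto simp: k0_def crossing_def)
    then have "running l c (\<lambda>i. Y i \<omega>) k0"
      by (simp add: running_def Z_def)
    then have "W \<omega> = Z k0"
      unfolding W_def Z_def using k0
      by (intro stopped_process_at_crossing) (simp_all add: crossing_def Z_def)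
    with k0 show "c \<le> W \<omega>"
      by (simp add: crossing_def)
  qed
  ultimately have "prob {\<omega>\<in>space M. \<exists>k\<in>{1..m}. l * (\<Sum>i\<in>{1..k}. Y i \<omega>) - real k * l\<^sup>2 / 8 \<ge> x}
                     \<le> prob {\<omega>\<in>space M. c \<le> W \<omega>}"
    by (rule finite_measure_mono[rotated])
  also have "\<dots> \<le> (\<integral>\<omega>. W \<omega> \<partial>M) / c"
    by (rule integral_Markov_inequality_measure[OF W_int sets.top W_nonneg]) (simp add: c_def)
  also have "\<dots> \<le> 1 / c"
    unfolding W_def c_def
    by (intro divide_right_mono stopped_process_expectation[OF indep bounded mgf] exp_ge_zero)
  also have "1 / c = exp (- x)"
    by (simp add: c_def exp_minus inverse_eq_divide)
  finally show ?thesis .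
qed

end

section \<open>Peeling: a time-uniform deviation bound\<close>

text \<open>A deviation \<open>S\<^sub>k \<ge> sqrt(k f / 2)\<close> at a time \<open>k\<close> with \<open>(1-\<delta>)\<^sup>2 c \<le> k \<le> (1+\<delta>)\<^sup>2 c\<close> forces
  the exponential supermartingale with the parameter \<open>\<lambda> = sqrt(8 f / c)\<close>, tuned to \<open>c\<close>, above
  \<open>exp(f (1 - \<delta>\<^sup>2))\<close>.\<close>

lemma slice_deviation:
  fixes f \<delta> c k S :: real
  assumes f: "f > 0" and \<delta>: "0 < \<delta>" "\<delta> < 1" and c: "c > 0"
    and lower: "(1 - \<delta>)\<^sup>2 * c \<le> k" and upper: "k \<le> (1 + \<delta>)\<^sup>2 * c"
    and dev: "S \<ge> sqrt (k * f / 2)"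
  shows "sqrt (8 * f / c) * S - k * (sqrt (8 * f / c))\<^sup>2 / 8 \<ge> f * (1 - \<delta>\<^sup>2)"
proof -
  have k0: "k \<ge> 0"
    using lower c by (meson less_imp_le mult_nonneg_nonneg order_trans zero_le_power2)
  define y where "y = sqrt (k / c)"
  have y2: "y\<^sup>2 = k / c"
    unfolding y_def using k0 c by simp
  have "sqrt ((1 - \<delta>)\<^sup>2) \<le> y"
    unfolding y_def using lower c by (intro real_sqrt_le_mono) (simp add: field_simps)
  moreover have "y \<le> sqrt ((1 + \<delta>)\<^sup>2)"
    unfolding y_def using upper c by (intro real_sqrt_le_mono) (simp add: field_simps)
  ultimately have y_near_1: "\<bar>1 - y\<bar> \<le> \<delta>"
    using \<delta> by simp
  have "8 * f / c * (k * f / 2) = (2 * f)\<^sup>2 * (k / c)"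
    using c by (simp add: power2_eq_square field_simps)
  then have "sqrt (8 * f / c) * sqrt (k * f / 2) = sqrt ((2 * f)\<^sup>2) * y"
    unfolding y_def by (metis real_sqrt_mult)
  also have "sqrt ((2 * f)\<^sup>2) = 2 * f"
    using f by (simp only: real_sqrt_abs)
  finally have "sqrt (8 * f / c) * sqrt (k * f / 2) = 2 * f * y" .
  then have "sqrt (8 * f / c) * S \<ge> 2 * f * y"
    using dev f c by (metis mult_left_mono real_sqrt_ge_zero zero_le_divide_iff zero_le_mult_iff
        zero_le_numeral less_imp_le)
  moreover have "k * (sqrt (8 * f / c))\<^sup>2 / 8 = f * y\<^sup>2"
    using f c by (simp add: y2)
  moreover have "2 * f * y - f * y\<^sup>2 = f * (1 - (1 - y)\<^sup>2)"
    by (simp add: power2_eq_square algebra_simps)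
  moreover have "(1 - y)\<^sup>2 \<le> \<delta>\<^sup>2"
    using y_near_1 \<delta> by (simp add: power2_le_iff_abs_le)
  then have "f * (1 - \<delta>\<^sup>2) \<le> f * (1 - (1 - y)\<^sup>2)"
    using f by (intro mult_left_mono) auto
  ultimately show ?thesis
    by linarith
qed

lemma geometric_slice:
  fixes \<delta> r :: real and k t :: nat
  assumes \<delta>: "0 < \<delta>" "\<delta> < 1" and k: "1 \<le> k" "k \<le> t"
  defines "r \<equiv> ((1 + \<delta>) / (1 - \<delta>))\<^sup>2"
  obtains j :: nat where "r ^ j \<le> k" "k \<le> r ^ Suc j" "real j \<le> ln (real t) / (2 * \<delta>)"
proof -
  have "ln ((1 + \<delta>) / (1 - \<delta>)) = ln (1 + \<delta>) - ln (1 - \<delta>)"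
    using \<delta> by (simp add: ln_div)
  moreover have "0 \<le> ln (1 + \<delta>)" "ln (1 - \<delta>) \<le> - \<delta>"
    using \<delta> ln_le_minus_one[of "1 - \<delta>"] by auto
  ultimately have "\<delta> \<le> ln ((1 + \<delta>) / (1 - \<delta>))"
    by linarith
  then have ln_r: "2 * \<delta> \<le> ln r"
    unfolding r_def using \<delta> by (simp add: ln_realpow)
  have "0 < ln r"
    using ln_r \<delta> by linarith
  moreover have "0 < r"
    using \<delta> by (simp add: r_def)
  ultimately have r1: "r > 1"
    by (rule ln_gt_zero_imp_gt_one)
  define j where "j = nat \<lfloor>log r k\<rfloor>"
  have "0 \<le> log r k"
    using r1 k by simp
  then have j_eq: "real j = of_int \<lfloor>log r k\<rfloor>"
    unfolding j_def by simp
  have "r powr j \<le> k" "k < r powr (j + 1)"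
    using floor_log_eq_powr_iff[of k r "\<lfloor>log r k\<rfloor>"] r1 k j_eq by (auto simp: add.commute)
  moreover have "r powr j = r ^ j"
    using r1 by (simp add: powr_realpow)
  moreover have "r powr (j + 1) = r ^ Suc j"
    using r1 powr_realpow[of r "Suc j"] by (simp add: add.commute)
  moreover have "real j \<le> ln (real t) / (2 * \<delta>)"
  proof -
    have "real j \<le> ln k / ln r"
      using j_eq by (simp add: log_def)
    also have "\<dots> \<le> ln t / (2 * \<delta>)"
      using k ln_r \<delta> by (intro frac_le) auto
    finally show ?thesis .
  qed
  ultimately show ?thesis
    using that by simp
qed

lemma ln_3_ge_1: "1 \<le> ln (3 :: real)"
  using exp_le by (simp add: ln_ge_iff)

lemma ln_ge_1:
  assumes "3 \<le> n"
  shows "1 \<le> ln (real n)"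
proof -
  have "ln 3 \<le> ln (real n)"
    using assms by simp
  then show ?thesis
    using ln_3_ge_1 by linarith
qed

lemma exploration_ge_1:
  assumes "3 \<le> t"
  shows "1 \<le> exploration t"
proof -
  have ln_t: "1 \<le> ln (real t)"
    using assms by (rule ln_ge_1)
  then have "0 \<le> ln (ln (real t))"
    by simp
  with ln_t show ?thesis
    unfolding exploration_def by linarith
qed

lemma exp_quarter_le_2: "exp (1 / 4 :: real) \<le> 2"
proof (rule ccontr)
  assume "\<not> exp (1 / 4 :: real) \<le> 2"
  then have "2 ^ 4 < exp (1 / 4 :: real) ^ 4"
    by (intro power_strict_mono) auto
  moreover have "exp (1 / 4 :: real) ^ 4 = exp 1"
    by (simp add: exp_of_nat_mult[symmetric])
  ultimately show False
    using exp_le by simp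
qed

text \<open>The arithmetic of the peeling argument: \<open>J + 1 \<le> 3 L\<^sup>2\<close> slices, each contributing
  \<open>exp(-f (1 - \<delta>\<^sup>2)) \<le> 2 / (t L\<^sup>3)\<close>, where \<open>L = log t\<close> and \<open>f = L + 3 log L\<close>.\<close>

lemma peeling_sum_bound:
  fixes t :: nat and L f \<delta> :: real
  assumes t: "3 \<le> t"
  defines "L \<equiv> ln (real t)"
  defines "f \<equiv> exploration t"
  defines "\<delta> \<equiv> 1 / (2 * sqrt f)"
  shows "(real (nat \<lfloor>L * sqrt f\<rfloor>) + 1) * exp (- (f * (1 - \<delta>\<^sup>2))) \<le> 6 / (t * L)"
proof -
  have L1: "1 \<le> L"
    unfolding L_def using t by (rule ln_ge_1)
  have f_eq: "f = L + 3 * ln L"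
    by (simp add: f_def L_def exploration_def)
  have lnL: "0 \<le> ln L" "ln L \<le> L"
    using L1 ln_le_minus_one[of L] by auto
  have f1: "1 \<le> f"
    unfolding f_def using t by (rule exploration_ge_1)
  have "f * \<delta>\<^sup>2 = 1 / 4"
    unfolding \<delta>_def using f1 by (simp add: power2_eq_square)
  then have "exp (- (f * (1 - \<delta>\<^sup>2))) = exp (1 / 4) * exp (- L) * exp (- (3 * ln L))"
    using f_eq by (simp add: algebra_simps flip: exp_add)
  also have "exp (- L) = 1 / t"
    unfolding L_def using t by (simp add: exp_minus inverse_eq_divide)
  also have "exp (- (3 * ln L)) = 1 / L ^ 3"
  proof -
    have "exp (3 * ln L) = exp (ln L) ^ 3"
      using exp_of_nat_mult[of 3 "ln L"] by simp
    also have "\<dots> = L ^ 3"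
      using L1 by simp
    finally have "exp (3 * ln L) = L ^ 3" .
    then show ?thesis
      by (simp add: exp_minus inverse_eq_divide)
  qed
  also have "exp (1 / 4) * (1 / t) * (1 / L ^ 3) \<le> 2 * (1 / t) * (1 / L ^ 3)"
    using exp_quarter_le_2 L1 by (intro mult_right_mono) auto
  finally have exp_bound: "exp (- (f * (1 - \<delta>\<^sup>2))) \<le> 2 / (t * L ^ 3)"
    by simp
  have "L \<le> L * L"
    using L1 by simp
  then have "f \<le> (2 * L)\<^sup>2"
    using f_eq lnL by (simp add: power2_eq_square)
  then have "sqrt f \<le> sqrt ((2 * L)\<^sup>2)"
    by (rule real_sqrt_le_mono)
  also have "sqrt ((2 * L)\<^sup>2) = 2 * L"
    using L1 by (simp only: real_sqrt_abs)
  finally have "sqrt f \<le> 2 * L" .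
  then have "L * sqrt f \<le> 2 * L\<^sup>2"
    using L1 by (simp add: power2_eq_square)
  moreover have "real (nat \<lfloor>L * sqrt f\<rfloor>) \<le> L * sqrt f"
    using L1 f1 by simp
  moreover have "1 \<le> L\<^sup>2"
    using L1 by simp
  ultimately have "real (nat \<lfloor>L * sqrt f\<rfloor>) + 1 \<le> 3 * L\<^sup>2"
    by linarith
  then have "(real (nat \<lfloor>L * sqrt f\<rfloor>) + 1) * exp (- (f * (1 - \<delta>\<^sup>2))) \<le> 3 * L\<^sup>2 * (2 / (t * L ^ 3))"
    using exp_bound by (intro mult_mono) auto
  also have "\<dots> = 6 / (t * L)"
    using L1 by (simp add: power2_eq_square power3_eq_cube field_simps)
  finally show ?thesis .
qed

lemma (in prob_space) peeling_deviation_bound: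
  fixes Y :: "nat \<Rightarrow> 'a \<Rightarrow> real" and t :: nat
  assumes indep: "indep_vars (\<lambda>_. borel) Y {1..}"
    and bounded: "\<And>i \<omega>. 1 \<le> i \<Longrightarrow> \<omega> \<in> space M \<Longrightarrow> \<bar>Y i \<omega>\<bar> \<le> 1"
    and mgf: "\<And>l i. 0 \<le> l \<Longrightarrow> 1 \<le> i \<Longrightarrow> (\<integral>\<omega>. hoeffding_factor l (Y i \<omega>) \<partial>M) \<le> 1"
    and t: "3 \<le> t"
  shows "prob {\<omega>\<in>space M. \<exists>k\<in>{1..t-1}. (\<Sum>i\<in>{1..k}. Y i \<omega>) \<ge> sqrt (real k * exploration t / 2)}
           \<le> 6 / (real t * ln (real t))"
proof -
  have [measurable]: "Y i \<in> borel_measurable M" if "1 \<le> i" for i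
    using indep that by (auto simp: indep_vars_def)
  define f where "f = exploration t"
  define \<delta> where "\<delta> = 1 / (2 * sqrt f)"
  define J where "J = nat \<lfloor>ln (real t) * sqrt f\<rfloor>"
  have f1: "1 \<le> f"
    unfolding f_def using t by (rule exploration_ge_1)
  have sqrt_f: "1 \<le> sqrt f"
    using f1 by simp
  have \<delta>: "0 < \<delta>" "\<delta> < 1"
    using f1 by (auto simp: \<delta>_def field_simps) (use sqrt_f in linarith)
  define r where "r = ((1 + \<delta>) / (1 - \<delta>))\<^sup>2"
  text \<open>Slice \<open>j\<close> is centred at \<open>c\<^sub>j\<close>, and \<open>\<lambda>\<^sub>j\<close> is the parameter tuned to it.\<close>
  define c where "c j = r ^ j / (1 - \<delta>)\<^sup>2" for j :: nat
  define lam where "lam j = sqrt (8 * f / c j)" for j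
  define x0 where "x0 = f * (1 - \<delta>\<^sup>2)"
  define A where "A j = {\<omega>\<in>space M. \<exists>k\<in>{1..t-1}. lam j * (\<Sum>i\<in>{1..k}. Y i \<omega>) - real k * (lam j)\<^sup>2 / 8 \<ge> x0}"
    for j
  have c_pos: "c j > 0" for j
    using \<delta> by (simp add: c_def r_def)
  have lam_nonneg: "0 \<le> lam j" for j
    using f1 c_pos[of j] by (simp add: lam_def)
  have cover: "{\<omega>\<in>space M. \<exists>k\<in>{1..t-1}. (\<Sum>i\<in>{1..k}. Y i \<omega>) \<ge> sqrt (real k * exploration t / 2)}
                 \<subseteq> (\<Union>j\<in>{..J}. A j)"
  proof safe
    fix \<omega> k
    assume \<omega>: "\<omega> \<in> space M" and k: "k \<in> {1..t-1}"
      and dev: "(\<Sum>i\<in>{1..k}. Y i \<omega>) \<ge> sqrt (real k * exploration t / 2)"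
    have k_range: "1 \<le> k" "k \<le> t"
      using k by auto
    obtain j where j: "r ^ j \<le> k" "k \<le> r ^ Suc j" "real j \<le> ln (real t) / (2 * \<delta>)"
      unfolding r_def by (rule geometric_slice[OF \<delta> k_range])
    have "ln (real t) / (2 * \<delta>) = ln (real t) * sqrt f"
      using f1 by (simp add: \<delta>_def)
    then have "j \<le> J"
      using j(3) by (simp add: J_def le_nat_floor)
    moreover have "(1 - \<delta>)\<^sup>2 * c j = r ^ j" "(1 + \<delta>)\<^sup>2 * c j = r ^ Suc j"
      using \<delta> by (simp_all add: c_def r_def field_simps)
    then have "x0 \<le> lam j * (\<Sum>i\<in>{1..k}. Y i \<omega>) - real k * (lam j)\<^sup>2 / 8"
      unfolding lam_def x0_def
      using slice_deviation[of f \<delta> "c j" k] f1 \<delta> c_pos j dev by (simp add: f_def)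
    ultimately show "\<omega> \<in> (\<Union>j\<in>{..J}. A j)"
      using \<omega> k unfolding A_def by blast
  qed
  have A_sets: "A j \<in> events" for j
    unfolding A_def by measurable
  have "prob {\<omega>\<in>space M. \<exists>k\<in>{1..t-1}. (\<Sum>i\<in>{1..k}. Y i \<omega>) \<ge> sqrt (real k * exploration t / 2)}
          \<le> prob (\<Union>j\<in>{..J}. A j)"
    using cover A_sets by (intro finite_measure_mono) auto
  also have "\<dots> \<le> (\<Sum>j\<in>{..J}. prob (A j))"
    using A_sets by (intro finite_measure_subadditive_finite) auto
  also have "\<dots> \<le> (\<Sum>j\<in>{..J}. exp (- x0))"
    unfolding A_def
    by (intro sum_mono exp_supermartingale_maximal[OF indep bounded mgf[OF lam_nonneg]])
  also have "\<dots> = (real J + 1) * exp (- x0)"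
    by simp
  also have "\<dots> \<le> 6 / (real t * ln (real t))"
    using peeling_sum_bound[OF t] by (simp add: J_def x0_def \<delta>_def f_def)
  finally show ?thesis .
qed

text \<open>Independence is preserved when a subfamily is re-indexed injectively; this extracts the
  reward sequence of a single arm from the jointly independent reward table.\<close>

lemma (in prob_space) indep_vars_reindex:
  assumes indep: "indep_vars M' X I" and inj: "inj_on g J" and into: "g ` J \<subseteq> I"
  shows "indep_vars (\<lambda>j. M' (g j)) (\<lambda>j. X (g j)) J"
proof -
  have rv: "\<forall>i\<in>I. random_variable (M' i) (X i)"
    and sets: "indep_sets (\<lambda>i. {X i -` A \<inter> space M | A. A \<in> sets (M' i)}) I"
    using indep unfolding indep_vars_def2 by auto
  show ?thesis
    unfolding indep_vars_def2
  proof safe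
    show "random_variable (M' (g j)) (X (g j))" if "j \<in> J" for j
      using rv into that by auto
    show "indep_sets (\<lambda>j. {X (g j) -` A \<inter> space M | A. A \<in> sets (M' (g j))}) J"
      unfolding indep_sets_def
    proof (intro conjI ballI allI impI)
      show "{X (g j) -` A \<inter> space M | A. A \<in> sets (M' (g j))} \<subseteq> events" if "j \<in> J" for j
        using rv into that by (auto simp: measurable_def)
    next
      fix J' A
      assume J': "J' \<subseteq> J" "J' \<noteq> {}" "finite J'"
        and A: "A \<in> (\<Pi> j\<in>J'. {X (g j) -` B \<inter> space M | B. B \<in> sets (M' (g j))})"
      have inj': "inj_on g J'"
        using inj_on_subset[OF inj J'(1)] .
      define A' where "A' i = A (inv_into J' g i)" for i
      have inv: "inv_into J' g (g j) = j" if "j \<in> J'" for j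
        using inj' that by simp
      have "prob (\<Inter>i\<in>g ` J'. A' i) = (\<Prod>i\<in>g ` J'. prob (A' i))"
        using sets J' into A unfolding indep_sets_def
        by (intro sets[unfolded indep_sets_def, THEN conjunct2, rule_format])
          (auto simp: A'_def inv Pi_iff)
      moreover have "(\<Inter>i\<in>g ` J'. A' i) = (\<Inter>j\<in>J'. A j)"
        by (auto simp: A'_def inv)
      moreover have "(\<Prod>i\<in>g ` J'. prob (A' i)) = (\<Prod>j\<in>J'. prob (A j))"
        using inj' by (simp add: prod.reindex A'_def inv)
      ultimately show "prob (\<Inter>j\<in>J'. A j) = (\<Prod>j\<in>J'. prob (A j))"
        by simp
    qed
  qed
qed

lemma (in prob_space) expectation_unit_interval:
  fixes Z :: "'a \<Rightarrow> real"
  assumes "Z \<in> borel_measurable M" and "\<And>\<omega>. \<omega> \<in> space M \<Longrightarrow> 0 \<le> Z \<omega> \<and> Z \<omega> \<le> 1"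
  shows "0 \<le> expectation Z" and "expectation Z \<le> 1"
proof -
  have "integrable M Z"
    using assms by (intro integrable_const_bound[where B = 1]) auto
  then have "expectation Z \<le> expectation (\<lambda>_. 1)"
    using assms by (intro integral_mono_AE AE_I2) auto
  then show "expectation Z \<le> 1"
    by (simp add: prob_space)
  show "0 \<le> expectation Z"
    using assms by (intro integral_nonneg_AE AE_I2) auto
qed

lemma (in prob_space) hoeffding_factor_expectation:
  fixes Z :: "'a \<Rightarrow> real"
  assumes Z [measurable]: "Z \<in> borel_measurable M"
    and range: "\<And>\<omega>. \<omega> \<in> space M \<Longrightarrow> 0 \<le> Z \<omega> \<and> Z \<omega> \<le> 1"
    and l: "0 \<le> l"
  shows "(\<integral>\<omega>. hoeffding_factor l (expectation Z - Z \<omega>) \<partial>M) \<le> 1"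
proof (cases "l = 0")
  case True
  then show ?thesis
    by (simp add: hoeffding_factor_def prob_space)
next
  case False
  then have l0: "0 < l"
    using l by simp
  interpret neg: interval_bounded_random_variable M "\<lambda>\<omega>. - Z \<omega>" "-1" 0
    by unfold_locales (use range in auto)
  note mean_range = expectation_unit_interval[OF Z range]
  have "(\<integral>\<^sup>+\<omega>. ennreal (exp (l * (expectation Z - Z \<omega>))) \<partial>M) \<le> ennreal (exp (l\<^sup>2 / 8))"
    using neg.Hoeffdings_lemma_nn_integral[OF l0] by simp
  moreover have "integrable M (\<lambda>\<omega>. exp (l * (expectation Z - Z \<omega>)))"
  proof (rule integrable_const_bound[where B = "exp l"])
    show "AE \<omega> in M. norm (exp (l * (expectation Z - Z \<omega>))) \<le> exp l"
    proof (rule AE_I2)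
      fix \<omega> assume "\<omega> \<in> space M"
      then have "expectation Z - Z \<omega> \<le> 1"
        using range mean_range by fastforce
      then have "l * (expectation Z - Z \<omega>) \<le> l"
        using l mult_left_mono[of _ 1 l] by simp
      then show "norm (exp (l * (expectation Z - Z \<omega>))) \<le> exp l"
        by simp
    qed
  qed measurable
  ultimately have "(\<integral>\<omega>. exp (l * (expectation Z - Z \<omega>)) \<partial>M) \<le> exp (l\<^sup>2 / 8)"
    by (simp add: nn_integral_eq_integral)
  then show ?thesis
    by (simp add: hoeffding_factor_def exp_diff)
qed

lemma ln_ge_1_minus_inverse: "0 < x \<Longrightarrow> 1 - 1 / x \<le> ln (x :: real)"
  using ln_le_minus_one[of "1 / x"] by (simp add: ln_div)

lemma ln_ln_3_ge: "1 / 21 \<le> ln (ln (3 :: real))"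
proof -
  have "exp (1 + 1 / 20 :: real) = exp 1 * exp (1 / 20)"
    by (rule exp_add)
  also have "\<dots> \<le> (272 / 100) * (11 / 10)"
    using e_less_272 real_exp_bound_lemma[of "1 / 20"] by (intro mult_mono) auto
  finally have "ln (exp (1 + 1 / 20)) < ln (3 :: real)"
    by (subst ln_less_cancel_iff) auto
  then have "21 / 20 < ln (3 :: real)"
    by simp
  then have "ln (21 / 20) \<le> ln (ln (3 :: real))"
    by simp
  moreover have "1 / 21 \<le> ln (21 / 20 :: real)"
    using ln_ge_1_minus_inverse[of "21 / 20"] by simp
  ultimately show ?thesis
    by linarith
qed

lemma ln_ln_2_ge: "- 1 \<le> ln (ln (2 :: real))"
proof -
  have "1 / ln (2 :: real) \<le> 1 / (2 / 3)"
    using ln2_ge_two_thirds by (intro divide_left_mono) auto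
  then show ?thesis
    using ln_ge_1_minus_inverse[of "ln 2"] ln2_ge_two_thirds by simp
qed

text \<open>Comparison of \<open>\<Sum> 1/(t log t)\<close> with the telescoping sum of \<open>log log t\<close>, which yields the
  \<open>O(log log n)\<close> contribution of the times where the optimal arm is underestimated.\<close>

lemma inverse_t_ln_t_le_ln_ln_diff:
  assumes n: "2 \<le> n"
  shows "1 / (real (Suc n) * ln (real (Suc n))) \<le> ln (ln (real (Suc n))) - ln (ln (real n))"
proof -
  define u where "u = ln (real n)"
  define v where "v = ln (real (Suc n))"
  have u0: "0 < u" and uv: "u < v"
    using n by (simp_all add: u_def v_def)
  have "1 - real n / real (Suc n) \<le> v - u"
    using ln_ge_1_minus_inverse[of "real (Suc n) / real n"] n by (simp add: u_def v_def ln_div)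
  then have "1 / real (Suc n) \<le> v - u"
    by (simp add: field_simps)
  then have "(1 / real (Suc n)) / v \<le> (v - u) / v"
    using u0 uv by (intro divide_right_mono) auto
  also have "(v - u) / v \<le> ln v - ln u"
    using ln_ge_1_minus_inverse[of "v / u"] u0 uv by (simp add: ln_div field_simps)
  finally show ?thesis
    by (simp add: u_def v_def)
qed

lemma sum_inverse_t_ln_t:
  assumes "2 \<le> n"
  shows "(\<Sum>t\<in>{3..n}. 1 / (real t * ln (real t))) \<le> ln (ln (real n)) - ln (ln 2)"
  using assms
proof (induction n rule: dec_induct)
  case (step m)
  have "{3..Suc m} = insert (Suc m) {3..m}"
    using step by auto
  then show ?case
    using step inverse_t_ln_t_le_ln_ln_diff[OF step(1)] by simp
qed simp

lemma threshold_geometric_sum: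
  fixes p :: "nat \<Rightarrow> real" and u c :: real
  assumes u: "0 \<le> u" and c: "0 < c"
    and small: "\<And>k. p k \<le> 1" and large: "\<And>k. u \<le> real k \<Longrightarrow> p k \<le> exp (- 2 * real k * c)"
  shows "(\<Sum>k\<in>{1..n}. p k) \<le> u + exp (- u * c) / (1 - exp (- c))"
proof -
  define w where "w = exp (- c)"
  have w: "0 \<le> w" "w < 1"
    using c by (auto simp: w_def)
  have "p k \<le> (if real k < u then 1 else exp (- u * c) * w ^ k)" for k
  proof (cases "real k < u")
    case False
    have "exp (- 2 * real k * c) = exp (- real k * c) * exp (- real k * c)"
      by (simp flip: exp_add)
    also have "\<dots> \<le> exp (- u * c) * exp (- real k * c)"
      using False c by (intro mult_right_mono) auto
    also have "exp (- real k * c) = w ^ k"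
      by (simp add: w_def flip: exp_of_nat_mult)
    finally have "exp (- 2 * real k * c) \<le> exp (- u * c) * w ^ k" .
    moreover have "p k \<le> exp (- 2 * real k * c)"
      using large False by (simp add: not_less)
    ultimately show ?thesis
      using False by simp
  qed (simp add: small)
  then have "(\<Sum>k\<in>{1..n}. p k) \<le> (\<Sum>k\<in>{1..n}. if real k < u then 1 else exp (- u * c) * w ^ k)"
    by (intro sum_mono)
  also have "\<dots> = real (card {k\<in>{1..n}. real k < u}) + exp (- u * c) * (\<Sum>k\<in>{k\<in>{1..n}. \<not> real k < u}. w ^ k)"
    by (simp add: sum.If_cases sum_distrib_left Int_def)
  also have "\<dots> \<le> u + exp (- u * c) * (1 / (1 - w))"
  proof (intro add_mono mult_left_mono)
    have "{k\<in>{1..n}. real k < u} \<subseteq> {1..<nat \<lceil>u\<rceil>}"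
    proof
      fix k assume "k \<in> {k\<in>{1..n}. real k < u}"
      then have "1 \<le> k" "real k < u"
        by auto
      then have "int k < \<lceil>u\<rceil>"
        by (simp add: less_ceiling_iff)
      with \<open>1 \<le> k\<close> show "k \<in> {1..<nat \<lceil>u\<rceil>}"
        by auto
    qed
    then have "card {k\<in>{1..n}. real k < u} \<le> nat \<lceil>u\<rceil> - 1"
      using card_mono[of "{1..<nat \<lceil>u\<rceil>}"] by fastforce
    then show "real (card {k\<in>{1..n}. real k < u}) \<le> u"
      using u by linarith
    have "(\<Sum>k\<in>{k\<in>{1..n}. \<not> real k < u}. w ^ k) \<le> (\<Sum>k<Suc n. w ^ k)"
      using w by (intro sum_mono2) auto
    also have "\<dots> = (1 - w ^ Suc n) / (1 - w)"
      using sum_gp_strict[of w "Suc n"] w by (simp del: sum.lessThan_Suc)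
    also have "\<dots> \<le> 1 / (1 - w)"
      using w by (intro divide_right_mono) auto
    finally show "(\<Sum>k\<in>{k\<in>{1..n}. \<not> real k < u}. w ^ k) \<le> 1 / (1 - w)" .
  qed simp
  finally show ?thesis
    by (simp add: w_def)
qed

lemma sqrt_mult_scaled:
  fixes k e :: real
  assumes "0 < k"
  shows "k * sqrt (e / (2 * k)) = sqrt (k * e / 2)"
proof -
  have "k * sqrt (e / (2 * k)) = sqrt (k\<^sup>2 * (e / (2 * k)))"
    using assms by (simp only: real_sqrt_mult real_sqrt_abs abs_of_pos)
  also have "k\<^sup>2 * (e / (2 * k)) = k * e / 2"
    using assms by (simp add: power2_eq_square)
  finally show ?thesis .
qed

text \<open>The hypotheses of the theorem, packaged as a locale.\<close>

locale ucb_bandit = prob_space +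
  fixes K :: nat and X :: "nat \<Rightarrow> nat \<Rightarrow> 'a \<Rightarrow> real"
    and tb :: "nat \<Rightarrow> nat list \<Rightarrow> real list \<Rightarrow> nat" and a astar :: nat
  assumes K2: "K \<ge> 2"
    and indep: "indep_vars (\<lambda>_. borel) (\<lambda>(b, s). X b s) ({1..K} \<times> {1..})"
    and ident: "\<forall>b\<in>{1..K}. \<forall>s\<ge>1. distr M borel (X b s) = distr M borel (X b 1)"
    and range: "\<forall>b\<in>{1..K}. \<forall>s\<ge>1. \<forall>\<omega>\<in>space M. 0 \<le> X b s \<omega> \<and> X b s \<omega> \<le> 1"
    and ucb: "\<forall>t h r. K < t \<longrightarrow> length h = t - 1 \<longrightarrow> length r = t - 1
                \<longrightarrow> is_ucb_choice K t h r (tb t h r)"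
    and meas: "\<forall>n. (\<lambda>\<omega>. fst (ucb_play K tb (\<lambda>b s. X b s \<omega>) n)) \<in> measurable M (count_space UNIV)"
    and astar: "astar \<in> {1..K}"
    and arm: "a \<in> {1..K}"
    and suboptimal: "(\<integral>\<omega>. X a 1 \<omega> \<partial>M) < (\<integral>\<omega>. X astar 1 \<omega> \<partial>M)"
begin

definition mean_opt :: real where "mean_opt = (\<integral>\<omega>. X astar 1 \<omega> \<partial>M)"
definition mean_a :: real where "mean_a = (\<integral>\<omega>. X a 1 \<omega> \<partial>M)"

lemma gap_pos: "0 < mean_opt - mean_a"
  using suboptimal by (simp add: mean_opt_def mean_a_def)

lemma arm_indep:
  assumes "b \<in> {1..K}"
  shows "indep_vars (\<lambda>_. borel) (X b) {1..}"
proof -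
  have "(\<lambda>s. (b, s)) ` {1..} \<subseteq> {1..K} \<times> {1..}"
    using assms by auto
  then have "indep_vars (\<lambda>_. borel) (\<lambda>s. (\<lambda>(b, s). X b s) (b, s)) {1..}"
    by (intro indep_vars_reindex[OF indep]) (auto simp: inj_on_def)
  then show ?thesis
    by simp
qed

lemma arm_measurable [measurable]: "b \<in> {1..K} \<Longrightarrow> 1 \<le> s \<Longrightarrow> X b s \<in> borel_measurable M"
  using arm_indep by (auto simp: indep_vars_def)

lemma arm_distr: "b \<in> {1..K} \<Longrightarrow> 1 \<le> s \<Longrightarrow> distr M borel (X b s) = distr M borel (X b 1)"
  using ident by blast

lemma arm_mean:
  assumes "b \<in> {1..K}" "1 \<le> s"
  shows "expectation (X b s) = expectation (X b 1)"
proof -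
  have "expectation (X b s) = (\<integral>x. x \<partial>distr M borel (X b s))"
    using assms by (simp add: integral_distr)
  also have "\<dots> = (\<integral>x. x \<partial>distr M borel (X b 1))"
    by (simp only: arm_distr[OF assms])
  also have "\<dots> = expectation (X b 1)"
    using assms by (simp add: integral_distr)
  finally show ?thesis .
qed

text \<open>The optimal arm is underestimated at time \<open>t\<close> (for some number \<open>k < t\<close> of its pulls) with
  probability at most \<open>6 / (t log t)\<close>; this is where the \<open>3 log log t\<close> term of the index pays off.\<close>

lemma optimal_arm_underestimated:
  assumes t: "3 \<le> t"
  shows "prob {\<omega>\<in>space M. \<exists>k\<in>{1..t-1}. sample_index (\<lambda>b s. X b s \<omega>) astar k t \<le> mean_opt}
           \<le> 6 / (real t * ln (real t))"
proof -
  define Y where "Y i \<omega> = mean_opt - X astar i \<omega>" for i \<omega>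
  have [measurable]: "1 \<le> i \<Longrightarrow> Y i \<in> borel_measurable M" for i
    unfolding Y_def using astar by measurable
  have Y_indep: "indep_vars (\<lambda>_. borel) Y {1..}"
    unfolding Y_def by (rule indep_vars_compose2[OF arm_indep[OF astar]]) measurable
  have X_range: "1 \<le> i \<Longrightarrow> \<omega> \<in> space M \<Longrightarrow> 0 \<le> X astar i \<omega> \<and> X astar i \<omega> \<le> 1" for i \<omega>
    using range astar by auto
  have mean_eq: "1 \<le> i \<Longrightarrow> expectation (X astar i) = mean_opt" for i
    unfolding mean_opt_def by (rule arm_mean[OF astar])
  have mgf: "(\<integral>\<omega>. hoeffding_factor l (Y i \<omega>) \<partial>M) \<le> 1" if "0 \<le> l" "1 \<le> i" for l i
    using hoeffding_factor_expectation[of "X astar i", OF _ X_range \<open>0 \<le> l\<close>] that astar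
    by (simp add: Y_def mean_eq)
  have Y_bounded: "\<bar>Y i \<omega>\<bar> \<le> 1" if "1 \<le> i" "\<omega> \<in> space M" for i \<omega>
    using expectation_unit_interval[of "X astar 1", OF _ X_range] X_range[OF that] astar
    by (auto simp: Y_def mean_opt_def)
  have "{\<omega>\<in>space M. \<exists>k\<in>{1..t-1}. sample_index (\<lambda>b s. X b s \<omega>) astar k t \<le> mean_opt}
          \<subseteq> {\<omega>\<in>space M. \<exists>k\<in>{1..t-1}. (\<Sum>i\<in>{1..k}. Y i \<omega>) \<ge> sqrt (real k * exploration t / 2)}"
  proof safe
    fix \<omega> k
    assume "\<omega> \<in> space M" "k \<in> {1..t-1}"
      and low: "sample_index (\<lambda>b s. X b s \<omega>) astar k t \<le> mean_opt"
    then have k: "0 < real k"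
      by simp
    have "(\<Sum>s\<in>{1..k}. X astar s \<omega>) / real k \<le> mean_opt - sqrt (exploration t / (2 * real k))"
      using low by (simp add: sample_index_def)
    then have "(\<Sum>s\<in>{1..k}. X astar s \<omega>) \<le> (mean_opt - sqrt (exploration t / (2 * real k))) * real k"
      using k by (simp add: pos_divide_le_eq)
    then have "real k * sqrt (exploration t / (2 * real k))
                 \<le> real k * mean_opt - (\<Sum>s\<in>{1..k}. X astar s \<omega>)"
      by (simp add: algebra_simps)
    then have "sqrt (real k * exploration t / 2)
                 \<le> real k * mean_opt - (\<Sum>s\<in>{1..k}. X astar s \<omega>)"
      by (simp only: sqrt_mult_scaled[OF k])
    also have "\<dots> = (\<Sum>i\<in>{1..k}. Y i \<omega>)"
      by (simp add: Y_def sum_subtractf)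
    finally show "\<exists>k\<in>{1..t-1}. (\<Sum>i\<in>{1..k}. Y i \<omega>) \<ge> sqrt (real k * exploration t / 2)"
      using \<open>k \<in> {1..t-1}\<close> by blast
  qed
  moreover have "{\<omega>\<in>space M. \<exists>k\<in>{1..t-1}. (\<Sum>i\<in>{1..k}. Y i \<omega>) \<ge> sqrt (real k * exploration t / 2)}
                   \<in> events"
    by measurable
  ultimately have "prob {\<omega>\<in>space M. \<exists>k\<in>{1..t-1}. sample_index (\<lambda>b s. X b s \<omega>) astar k t \<le> mean_opt}
      \<le> prob {\<omega>\<in>space M. \<exists>k\<in>{1..t-1}. (\<Sum>i\<in>{1..k}. Y i \<omega>) \<ge> sqrt (real k * exploration t / 2)}"
    by (rule finite_measure_mono)
  also have "\<dots> \<le> 6 / (real t * ln (real t))"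
    by (rule peeling_deviation_bound[OF Y_indep Y_bounded mgf t])
  finally show ?thesis .
qed

lemma arm_overestimated:
  assumes k: "1 \<le> k" and q: "q \<le> mean_opt - mean_a"
  shows "prob {\<omega>\<in>space M. mean_opt < (\<Sum>s\<in>{1..k}. X a s \<omega>) / real k + q}
           \<le> exp (- 2 * real k * (mean_opt - mean_a - q)\<^sup>2)"
proof -
  interpret H: Hoeffding_ineq_iid M "{1..k}" "\<lambda>s. X a s" "X a 1" 0 1 "expectation (X a 1)"
  proof unfold_locales
    show "indep_vars (\<lambda>_. borel) (\<lambda>s. X a s) {1..k}"
      using arm_indep[OF arm] by (rule indep_vars_subset) auto
    show "distr M borel (X a i) = distr M borel (X a 1)" if "i \<in> {1..k}" for i
      using that by (intro arm_distr[OF arm]) simp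
    show "AE x in M. X a 1 x \<in> {0..1}"
      using range arm by (intro AE_I2) auto
    show "finite {1..k}"
      by simp
    show "random_variable borel (X a 1)"
      using arm by measurable
  qed
  define \<epsilon> where "\<epsilon> = real k * (mean_opt - mean_a - q)"
  have "{\<omega>\<in>space M. mean_opt < (\<Sum>s\<in>{1..k}. X a s \<omega>) / real k + q}
          \<subseteq> {\<omega>\<in>space M. (\<Sum>i\<in>{1..k}. X a i \<omega>) \<ge> real (card {1..k}) * expectation (X a 1) + \<epsilon>}"
  proof safe
    fix \<omega> assume "mean_opt < (\<Sum>s\<in>{1..k}. X a s \<omega>) / real k + q"
    then have "real k * mean_opt - real k * q < (\<Sum>s\<in>{1..k}. X a s \<omega>)"
      using k by (simp add: field_simps)
    then show "real (card {1..k}) * expectation (X a 1) + \<epsilon> \<le> (\<Sum>i\<in>{1..k}. X a i \<omega>)"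
      by (simp add: \<epsilon>_def mean_a_def algebra_simps)
  qed
  moreover have "{\<omega>\<in>space M. (\<Sum>i\<in>{1..k}. X a i \<omega>) \<ge> real (card {1..k}) * expectation (X a 1) + \<epsilon>}
                   \<in> events"
    using arm by measurable
  ultimately have "prob {\<omega>\<in>space M. mean_opt < (\<Sum>s\<in>{1..k}. X a s \<omega>) / real k + q}
                     \<le> prob {\<omega>\<in>space M. (\<Sum>i\<in>{1..k}. X a i \<omega>) \<ge> real (card {1..k}) * expectation (X a 1) + \<epsilon>}"
    by (rule finite_measure_mono)
  also have "\<dots> \<le> exp (- 2 * \<epsilon>\<^sup>2 / (real (card {1..k}) * (1 - 0)\<^sup>2))"
    using q k by (intro H.Hoeffding_ineq_ge) (auto simp: \<epsilon>_def)
  also have "- 2 * \<epsilon>\<^sup>2 / (real (card {1..k}) * (1 - 0)\<^sup>2) = - 2 * real k * (mean_opt - mean_a - q)\<^sup>2"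
    using k by (simp add: \<epsilon>_def power2_eq_square)
  finally show ?thesis .
qed

end

context ucb_bandit
begin

definition underestimated :: "nat \<Rightarrow> 'a set" where
  "underestimated t =
     {\<omega>\<in>space M. \<exists>k\<in>{1..t-1}. sample_index (\<lambda>b s. X b s \<omega>) astar k t \<le> mean_opt}"

definition overestimated :: "nat \<Rightarrow> nat \<Rightarrow> 'a set" where
  "overestimated n k = {\<omega>\<in>space M. mean_opt < sample_index (\<lambda>b s. X b s \<omega>) a k n}"

lemma underestimated_sets: "underestimated t \<in> events"
  unfolding underestimated_def sample_index_def using astar by measurable

lemma overestimated_sets: "overestimated n k \<in> events"
  unfolding overestimated_def sample_index_def using arm by measurable

lemma pulls_le_indicators:
  assumes "\<omega> \<in> space M"
  shows "real (pulls K tb (\<lambda>b s. X b s \<omega>) n a)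
           \<le> 1 + (\<Sum>t\<in>{K<..n}. indicator (underestimated t) \<omega>)
               + (\<Sum>k\<in>{1..n}. indicator (overestimated n k) \<omega>)"
proof -
  define x where "x = (\<lambda>b s. X b s \<omega>)"
  have "card {k\<in>{1..n}. k < cnt a (fst (ucb_play K tb x n)) \<and> mean_opt < sample_index x a k n}
          \<le> card {k\<in>{1..n}. \<omega> \<in> overestimated n k}"
    using assms by (intro card_mono) (auto simp: overestimated_def x_def)
  moreover have "card {t\<in>{K<..n}. \<exists>k\<in>{1..t-1}. sample_index x astar k t \<le> mean_opt}
                   = card {t\<in>{K<..n}. \<omega> \<in> underestimated t}"
    using assms by (simp add: underestimated_def x_def)
  ultimately have "pulls K tb x n a
                     \<le> 1 + card {t\<in>{K<..n}. \<omega> \<in> underestimated t} + card {k\<in>{1..n}. \<omega> \<in> overestimated n k}"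
    using pulls_decomposition[OF K2 ucb astar order.refl, where x = x and a = a and \<mu> = mean_opt and m = n]
    unfolding pulls_def by linarith
  then show ?thesis
    by (simp add: x_def indicator_def sum.If_cases Int_def)
qed

lemma expected_pulls_decomposition:
  "(\<integral>\<omega>. real (pulls K tb (\<lambda>b s. X b s \<omega>) n a) \<partial>M)
     \<le> 1 + (\<Sum>t\<in>{K<..n}. prob (underestimated t)) + (\<Sum>k\<in>{1..n}. prob (overestimated n k))"
proof -
  have "(\<lambda>\<omega>. real (cnt a (fst (ucb_play K tb (\<lambda>b s. X b s \<omega>) n)))) \<in> borel_measurable M"
    using measurable_comp[OF meas[rule_format, of n], of "\<lambda>h. real (cnt a h)"] by (simp add: comp_def)
  moreover have "real (cnt a (fst (ucb_play K tb (\<lambda>b s. X b s \<omega>) n))) \<le> real n" for \<omega>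
    using cnt_le_length ucb_play_length by (metis of_nat_le_iff)
  ultimately have "integrable M (\<lambda>\<omega>. real (pulls K tb (\<lambda>b s. X b s \<omega>) n a))"
    unfolding pulls_def by (intro integrable_const_bound[where B = "real n"]) auto
  moreover have int_under: "integrable M (indicator (underestimated t) :: 'a \<Rightarrow> real)" for t
    using underestimated_sets by (intro integrable_real_indicator) (auto simp: less_top[symmetric])
  moreover have int_over: "integrable M (indicator (overestimated n k) :: 'a \<Rightarrow> real)" for k
    using overestimated_sets by (intro integrable_real_indicator) (auto simp: less_top[symmetric])
  ultimately have "(\<integral>\<omega>. real (pulls K tb (\<lambda>b s. X b s \<omega>) n a) \<partial>M)
      \<le> (\<integral>\<omega>. 1 + (\<Sum>t\<in>{K<..n}. indicator (underestimated t) \<omega>)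
               + (\<Sum>k\<in>{1..n}. indicator (overestimated n k) \<omega>) \<partial>M)"
    using pulls_le_indicators by (intro integral_mono) auto
  also have "\<dots> = 1 + (\<Sum>t\<in>{K<..n}. prob (underestimated t)) + (\<Sum>k\<in>{1..n}. prob (overestimated n k))"
    using int_under int_over underestimated_sets overestimated_sets
    by (simp add: prob_space)
  finally show ?thesis .
qed

lemma underestimation_sum:
  assumes n: "3 \<le> n"
  shows "(\<Sum>t\<in>{K<..n}. prob (underestimated t)) \<le> 6 * ln (ln (real n)) + 6"
proof -
  have "(\<Sum>t\<in>{K<..n}. prob (underestimated t)) \<le> (\<Sum>t\<in>{K<..n}. 6 / (real t * ln (real t)))"
  proof (intro sum_mono)
    fix t assume "t \<in> {K<..n}"
    then have "3 \<le> t"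
      using K2 by simp
    then show "prob (underestimated t) \<le> 6 / (real t * ln (real t))"
      unfolding underestimated_def by (rule optimal_arm_underestimated)
  qed
  also have "\<dots> \<le> (\<Sum>t\<in>{3..n}. 6 / (real t * ln (real t)))"
    using K2 by (intro sum_mono2) auto
  also have "\<dots> = 6 * (\<Sum>t\<in>{3..n}. 1 / (real t * ln (real t)))"
    by (simp add: sum_distrib_left)
  also have "\<dots> \<le> 6 * (ln (ln (real n)) - ln (ln 2))"
    using sum_inverse_t_ln_t[of n] n by simp
  also have "\<dots> \<le> 6 * ln (ln (real n)) + 6"
    using ln_ln_2_ge by simp
  finally show ?thesis .
qed

text \<open>Beyond \<open>u = f(n)(1+e)/(2\<Delta>\<^sup>2)\<close> pulls, the exploration bonus at level \<open>f(n)\<close> is at most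
  \<open>\<Delta>/sqrt(1+e)\<close>, so Hoeffding's inequality leaves a margin of \<open>\<Delta>(1 - 1/sqrt(1+e))\<close>.\<close>

lemma overestimation_prob:
  assumes e: "0 < e" and n: "3 \<le> n"
    and k: "exploration n * (1 + e) / (2 * (mean_opt - mean_a)\<^sup>2) \<le> real k"
  shows "prob (overestimated n k) \<le> exp (- 2 * real k * ((mean_opt - mean_a) * (1 - 1 / sqrt (1 + e)))\<^sup>2)"
proof -
  define \<Delta> where "\<Delta> = mean_opt - mean_a"
  define q where "q = sqrt (exploration n / (2 * real k))"
  define u where "u = exploration n * (1 + e) / (2 * \<Delta>\<^sup>2)"
  have \<Delta>: "0 < \<Delta>"
    using gap_pos by (simp add: \<Delta>_def)
  have f1: "1 \<le> exploration n"
    using n by (rule exploration_ge_1)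
  then have u_pos: "0 < u"
    using e \<Delta> by (simp add: u_def)
  have u_le: "u \<le> real k"
    using k by (simp add: u_def \<Delta>_def)
  then have k1: "1 \<le> k"
    using u_pos by simp
  have "exploration n / (2 * real k) \<le> exploration n / (2 * u)"
    using u_le u_pos f1 by (intro divide_left_mono mult_pos_pos) auto
  also have "\<dots> = \<Delta>\<^sup>2 / (1 + e)"
    using f1 e \<Delta> by (simp add: u_def divide_simps)
  finally have "q \<le> sqrt (\<Delta>\<^sup>2 / (1 + e))"
    unfolding q_def by (rule real_sqrt_le_mono)
  also have "\<dots> = \<Delta> / sqrt (1 + e)"
    using \<Delta> by (simp add: real_sqrt_divide)
  finally have q_le: "q \<le> \<Delta> / sqrt (1 + e)" .
  have s1: "1 < sqrt (1 + e)"
    using e by simp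
  then have "\<Delta> / sqrt (1 + e) \<le> \<Delta>"
    using \<Delta> by (simp add: field_simps)
  then have "prob (overestimated n k) \<le> exp (- 2 * real k * (\<Delta> - q)\<^sup>2)"
    using arm_overestimated[OF k1, of q] q_le
    by (simp add: overestimated_def sample_index_def q_def \<Delta>_def)
  also have "\<dots> \<le> exp (- 2 * real k * (\<Delta> * (1 - 1 / sqrt (1 + e)))\<^sup>2)"
  proof -
    have "1 / sqrt (1 + e) < 1"
      using s1 by simp
    then have "0 \<le> \<Delta> * (1 - 1 / sqrt (1 + e))"
      using \<Delta> by simp
    moreover have "\<Delta> * (1 - 1 / sqrt (1 + e)) = \<Delta> - \<Delta> / sqrt (1 + e)"
      by (simp add: algebra_simps)
    then have "\<Delta> * (1 - 1 / sqrt (1 + e)) \<le> \<Delta> - q"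
      using q_le by linarith
    ultimately have "(\<Delta> * (1 - 1 / sqrt (1 + e)))\<^sup>2 \<le> (\<Delta> - q)\<^sup>2"
      by (intro power_mono)
    then show ?thesis
      by (simp add: mult_left_mono)
  qed
  finally show ?thesis
    by (simp add: \<Delta>_def)
qed

text \<open>Summing over \<open>k\<close>: the threshold \<open>u\<close> gives the leading term \<open>log n (1+\<epsilon>)/(2\<Delta>\<^sup>2)\<close> plus a
  \<open>log log n\<close> term, and the geometric tail beyond \<open>u\<close> decays polynomially in \<open>n\<close>.\<close>

lemma overestimation_sum:
  assumes \<epsilon>: "0 < \<epsilon>"
  shows "\<exists>C2>0. \<exists>\<beta>>0. \<forall>n\<ge>3. (\<Sum>k\<in>{1..n}. prob (overestimated n k))
           \<le> ln (real n) / (2 * (mean_opt - mean_a)\<^sup>2) * (1 + \<epsilon>)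
             + 3 / (mean_opt - mean_a)\<^sup>2 * ln (ln (real n)) + C2 / real n powr \<beta>"
proof -
  define \<Delta> where "\<Delta> = mean_opt - mean_a"
  have \<Delta>: "0 < \<Delta>"
    using gap_pos by (simp add: \<Delta>_def)
  define e where "e = min \<epsilon> 1"
  have e: "0 < e" "e \<le> 1" "e \<le> \<epsilon>"
    using \<epsilon> by (auto simp: e_def)
  define \<rho> where "\<rho> = 1 - 1 / sqrt (1 + e)"
  have \<rho>: "0 < \<rho>"
    using e by (simp add: \<rho>_def)
  define c where "c = (\<Delta> * \<rho>)\<^sup>2"
  define \<beta> where "\<beta> = (1 + e) * \<rho>\<^sup>2 / 2"
  define C2 where "C2 = 1 / (1 - exp (- c))"
  have c: "0 < c"
    using \<Delta> \<rho> by (simp add: c_def)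
  have "0 < C2" "0 < \<beta>"
    using c e \<rho> by (simp_all add: C2_def \<beta>_def)
  moreover have "(\<Sum>k\<in>{1..n}. prob (overestimated n k))
           \<le> ln (real n) / (2 * \<Delta>\<^sup>2) * (1 + \<epsilon>) + 3 / \<Delta>\<^sup>2 * ln (ln (real n)) + C2 / real n powr \<beta>"
    if n: "3 \<le> n" for n
  proof -
    define L where "L = ln (real n)"
    define u where "u = exploration n * (1 + e) / (2 * \<Delta>\<^sup>2)"
    have L1: "1 \<le> L"
      unfolding L_def using n by (rule ln_ge_1)
    have lnL: "0 \<le> ln L"
      using L1 by simp
    have f_eq: "exploration n = L + 3 * ln L"
      by (simp add: exploration_def L_def)
    have u0: "0 \<le> u"
      using L1 lnL e by (simp add: u_def f_eq)
    have "(\<Sum>k\<in>{1..n}. prob (overestimated n k)) \<le> u + exp (- u * c) / (1 - exp (- c))"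
      using overestimation_prob[OF e(1) n] by (intro threshold_geometric_sum[OF u0 c])
        (simp_all add: u_def c_def \<rho>_def \<Delta>_def)
    also have "exp (- u * c) \<le> 1 / real n powr \<beta>"
    proof -
      have "u * c = exploration n * \<beta>"
        using \<Delta> by (simp add: u_def c_def \<beta>_def power_mult_distrib)
      moreover have "L * \<beta> \<le> exploration n * \<beta>"
        using lnL \<open>0 < \<beta>\<close> by (simp add: f_eq)
      ultimately have "exp (- u * c) \<le> exp (- L * \<beta>)"
        by simp
      also have "\<dots> = 1 / real n powr \<beta>"
        using n by (simp add: L_def powr_def exp_minus inverse_eq_divide)
      finally show ?thesis .
    qed
    then have "exp (- u * c) / (1 - exp (- c)) \<le> (1 / real n powr \<beta>) / (1 - exp (- c))"
      using c by (intro divide_right_mono) auto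
    also have "\<dots> = C2 / real n powr \<beta>"
      by (simp add: C2_def)
    also have "u \<le> L / (2 * \<Delta>\<^sup>2) * (1 + \<epsilon>) + 3 / \<Delta>\<^sup>2 * ln L"
    proof -
      have "u = L / (2 * \<Delta>\<^sup>2) * (1 + e) + 3 * ln L * (1 + e) / (2 * \<Delta>\<^sup>2)"
        using \<Delta> by (simp add: u_def f_eq field_simps)
      also have "\<dots> \<le> L / (2 * \<Delta>\<^sup>2) * (1 + \<epsilon>) + 3 * ln L * 2 / (2 * \<Delta>\<^sup>2)"
        using e L1 lnL \<Delta> by (intro add_mono mult_left_mono divide_right_mono) auto
      finally show ?thesis
        by simp
    qed
    finally show ?thesis
      by (simp add: L_def)
  qed
  ultimately show ?thesis
    unfolding \<Delta>_def by blast
qed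

text \<open>The additive constant \<open>1 + 6\<close> of the
  decomposition is absorbed into the \<open>log log n\<close> term, using \<open>log log n \<ge> 1/21\<close> for \<open>n \<ge> 3\<close>.\<close>

theorem expected_pulls_bound:
  "\<exists>C1>0. \<forall>\<epsilon>>0. \<exists>C2>0. \<exists>\<beta>>0. \<forall>n\<ge>3.
     (\<integral>\<omega>. real (pulls K tb (\<lambda>b s. X b s \<omega>) n a) \<partial>M)
       \<le> ln (real n) / (2 * (mean_opt - mean_a)\<^sup>2) * (1 + \<epsilon>)
         + C1 * ln (ln (real n)) + C2 / real n powr \<beta>"
proof -
  define C1 where "C1 = 153 + 3 / (mean_opt - mean_a)\<^sup>2"
  have "0 < C1"
    by (simp add: C1_def add_pos_nonneg)
  moreover have "\<exists>C2>0. \<exists>\<beta>>0. \<forall>n\<ge>3.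
      (\<integral>\<omega>. real (pulls K tb (\<lambda>b s. X b s \<omega>) n a) \<partial>M)
        \<le> ln (real n) / (2 * (mean_opt - mean_a)\<^sup>2) * (1 + \<epsilon>)
          + C1 * ln (ln (real n)) + C2 / real n powr \<beta>"
    if "0 < \<epsilon>" for \<epsilon>
  proof -
    obtain C2 \<beta> where "0 < C2" "0 < \<beta>" and overest: "\<forall>n\<ge>3.
        (\<Sum>k\<in>{1..n}. prob (overestimated n k))
          \<le> ln (real n) / (2 * (mean_opt - mean_a)\<^sup>2) * (1 + \<epsilon>)
            + 3 / (mean_opt - mean_a)\<^sup>2 * ln (ln (real n)) + C2 / real n powr \<beta>"
      using overestimation_sum[OF \<open>0 < \<epsilon>\<close>] by blast
    have "(\<integral>\<omega>. real (pulls K tb (\<lambda>b s. X b s \<omega>) n a) \<partial>M)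
            \<le> ln (real n) / (2 * (mean_opt - mean_a)\<^sup>2) * (1 + \<epsilon>)
              + C1 * ln (ln (real n)) + C2 / real n powr \<beta>"
      if n: "3 \<le> n" for n
    proof -
      have "ln (ln 3) \<le> ln (ln (real n))"
        using n by (simp add: ln_ge_1)
      then have "7 \<le> 147 * ln (ln (real n))"
        using ln_ln_3_ge by linarith
      moreover have "C1 * ln (ln (real n))
                       = 153 * ln (ln (real n)) + 3 / (mean_opt - mean_a)\<^sup>2 * ln (ln (real n))"
        by (simp add: C1_def distrib_right)
      ultimately show ?thesis
        using expected_pulls_decomposition[of n] underestimation_sum[OF n] overest[rule_format, OF n]
        by linarith
    qed
    with \<open>0 < C2\<close> \<open>0 < \<beta>\<close> show ?thesis
      by blast
  qed
  ultimately show ?thesis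
    by blast
qed

end

text \<open>The theorem is the locale result for the bandit hypotheses.\<close>

theorem proposition1:
  fixes M :: "'w measure" and K :: nat and X :: "nat \<Rightarrow> nat \<Rightarrow> 'w \<Rightarrow> real"
    and tb :: "nat \<Rightarrow> nat list \<Rightarrow> real list \<Rightarrow> nat" and a astar :: nat
  assumes "prob_space M"
    and "K \<ge> 2"
    and indep: "prob_space.indep_vars M (\<lambda>_. borel) (\<lambda>(b, s). X b s) ({1..K} \<times> {1..})"
    and ident: "\<forall>b\<in>{1..K}. \<forall>s\<ge>1. distr M borel (X b s) = distr M borel (X b 1)"
    and range: "\<forall>b\<in>{1..K}. \<forall>s\<ge>1. \<forall>\<omega>\<in>space M. 0 \<le> X b s \<omega> \<and> X b s \<omega> \<le> 1"
    and ucb: "\<forall>t h r. K < t \<longrightarrow> length h = t - 1 \<longrightarrow> length r = t - 1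
                \<longrightarrow> is_ucb_choice K t h r (tb t h r)"
    and meas: "\<forall>n. (\<lambda>\<omega>. fst (ucb_play K tb (\<lambda>b s. X b s \<omega>) n)) \<in> measurable M (count_space UNIV)"
    and "astar \<in> {1..K}"
    and "\<forall>b\<in>{1..K}. (\<integral>\<omega>. X b 1 \<omega> \<partial>M) \<le> (\<integral>\<omega>. X astar 1 \<omega> \<partial>M)"
    and "a \<in> {1..K}"
    and "(\<integral>\<omega>. X a 1 \<omega> \<partial>M) < (\<integral>\<omega>. X astar 1 \<omega> \<partial>M)"
  shows "\<exists>C1>0. \<forall>\<epsilon>>0. \<exists>C2>0. \<exists>\<beta>>0. \<forall>n::nat\<ge>3.
           (\<integral>\<omega>. real (pulls K tb (\<lambda>b s. X b s \<omega>) n a) \<partial>M)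
           \<le> ln (real n) / (2 * ((\<integral>\<omega>. X a 1 \<omega> \<partial>M) - (\<integral>\<omega>. X astar 1 \<omega> \<partial>M))\<^sup>2) * (1 + \<epsilon>)
             + C1 * ln (ln (real n)) + C2 / real n powr \<beta>"
proof -
  interpret ucb_bandit M K X tb a astar
    by (rule ucb_bandit.intro[OF assms(1) ucb_bandit_axioms.intro[OF assms(2-8,10,11)]])
  have "((\<integral>\<omega>. X a 1 \<omega> \<partial>M) - (\<integral>\<omega>. X astar 1 \<omega> \<partial>M))\<^sup>2 = (mean_opt - mean_a)\<^sup>2"
    by (simp add: mean_opt_def mean_a_def power2_commute)
  then show ?thesis
    using expected_pulls_bound by simp
qed

end
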